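(* Let $G=(V,E)$ be a finite, simple, connected graph which is Lichnerowicz sharp and distance regular. Then $G$ is effective Bonnet Myers sharp, i.e. with $K:=\min_{x\sim y}\kappa(x,y)$ one has $\operatorname{diam}_{\operatorname{eff}}(G)=\frac{\max_v\operatorname{Deg}(v)}{K}$.
   Context: $d$ is the combinatorial distance, $\operatorname{Deg}$ the degree, $\operatorname{diam}_{\operatorname{eff}}(G)=\frac{1}{|V|^2}\sum_{x,y}d(x,y)$. Laplacian $\Delta f(x)=\sum_{y\sim x}(f(y)-f(x))$. Ollivier curvature: $\kappa(x,y)=\inf\{\Delta f(x)-\Delta f(y): f(y)-f(x)=1,\ \max_{u\sim v}|f(u)-f(v)|=1\}$. Lichnerowicz sharp: the smallest positive eigenvalue $\lambda$ of $-\Delta$ equals $\min_{x\sim y}\kappa(x,y)$. Distance regular: there are numbers $b_n,c_n$ such that for every $x$ and every $z$ with $d(x,z)=n$, $z$ has $b_n$ neighbors at distance $n+1$ and $c_n$ neighbors at distance $n-1$ from $x$. *)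

theory Defs
  imports Complex_Main
begin

definition simple_graph :: "'a set \<Rightarrow> ('a \<Rightarrow> 'a \<Rightarrow> bool) \<Rightarrow> bool" where
  "simple_graph V E \<longleftrightarrow> finite V \<and> (\<forall>u v. E u v \<longrightarrow> u \<in> V \<and> v \<in> V)
     \<and> (\<forall>u v. E u v \<longrightarrow> E v u) \<and> (\<forall>u. \<not> E u u)"

definition is_walk :: "'a set \<Rightarrow> ('a \<Rightarrow> 'a \<Rightarrow> bool) \<Rightarrow> (nat \<Rightarrow> 'a) \<Rightarrow> nat \<Rightarrow> 'a \<Rightarrow> 'a \<Rightarrow> bool" where
  "is_walk V E p n x y \<longleftrightarrow> p 0 = x \<and> p n = y \<and> (\<forall>i\<le>n. p i \<in> V) \<and> (\<forall>i<n. E (p i) (p (Suc i)))"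

definition connected_graph :: "'a set \<Rightarrow> ('a \<Rightarrow> 'a \<Rightarrow> bool) \<Rightarrow> bool" where
  "connected_graph V E \<longleftrightarrow> (\<forall>x\<in>V. \<forall>y\<in>V. \<exists>p n. is_walk V E p n x y)"

definition gdist :: "'a set \<Rightarrow> ('a \<Rightarrow> 'a \<Rightarrow> bool) \<Rightarrow> 'a \<Rightarrow> 'a \<Rightarrow> nat" where
  "gdist V E x y = (LEAST n. \<exists>p. is_walk V E p n x y)"

definition Deg :: "'a set \<Rightarrow> ('a \<Rightarrow> 'a \<Rightarrow> bool) \<Rightarrow> 'a \<Rightarrow> nat" where
  "Deg V E x = card {y\<in>V. E x y}"

definition diam_eff :: "'a set \<Rightarrow> ('a \<Rightarrow> 'a \<Rightarrow> bool) \<Rightarrow> real" where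
  "diam_eff V E = (1 / real (card V) ^ 2) * (\<Sum>x\<in>V. \<Sum>y\<in>V. real (gdist V E x y))"

definition laplacian :: "'a set \<Rightarrow> ('a \<Rightarrow> 'a \<Rightarrow> bool) \<Rightarrow> ('a \<Rightarrow> real) \<Rightarrow> 'a \<Rightarrow> real" where
  "laplacian V E f x = (\<Sum>y\<in>{y\<in>V. E x y}. f y - f x)"

text \<open>Ollivier curvature (Lin--Lu--Yau / Muench--Wojciechowski limit-free formulation).\<close>
definition ollivier_curv :: "'a set \<Rightarrow> ('a \<Rightarrow> 'a \<Rightarrow> bool) \<Rightarrow> 'a \<Rightarrow> 'a \<Rightarrow> real" where
  "ollivier_curv V E x y = Inf {laplacian V E f x - laplacian V E f y | f.
      f y - f x = 1 \<and> Max {\<bar>f u - f v\<bar> | u v. u \<in> V \<and> v \<in> V \<and> E u v} = 1}"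

definition is_eigenvalue_neg_lap :: "'a set \<Rightarrow> ('a \<Rightarrow> 'a \<Rightarrow> bool) \<Rightarrow> real \<Rightarrow> bool" where
  "is_eigenvalue_neg_lap V E lam \<longleftrightarrow> (\<exists>f. (\<exists>x\<in>V. f x \<noteq> 0) \<and> (\<forall>x\<in>V. - laplacian V E f x = lam * f x))"

definition min_curv :: "'a set \<Rightarrow> ('a \<Rightarrow> 'a \<Rightarrow> bool) \<Rightarrow> real" where
  "min_curv V E = Min {ollivier_curv V E x y | x y. x \<in> V \<and> y \<in> V \<and> E x y}"

definition lichnerowicz_sharp :: "'a set \<Rightarrow> ('a \<Rightarrow> 'a \<Rightarrow> bool) \<Rightarrow> bool" where
  "lichnerowicz_sharp V E \<longleftrightarrow> (\<exists>lam. lam > 0 \<and> is_eigenvalue_neg_lap V E lam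
      \<and> (\<forall>mu. mu > 0 \<and> is_eigenvalue_neg_lap V E mu \<longrightarrow> lam \<le> mu)
      \<and> lam = min_curv V E)"

definition distance_regular :: "'a set \<Rightarrow> ('a \<Rightarrow> 'a \<Rightarrow> bool) \<Rightarrow> bool" where
  "distance_regular V E \<longleftrightarrow> (\<exists>b c :: nat \<Rightarrow> nat. \<forall>x\<in>V. \<forall>z\<in>V.
      card {w\<in>V. E z w \<and> gdist V E x w = gdist V E x z + 1} = b (gdist V E x z)
    \<and> card {w\<in>V. E z w \<and> gdist V E x w + 1 = gdist V E x z} = c (gdist V E x z))"

end

theory Submission
  imports Defs
begin

text \<open>By Lichnerowicz sharpness K = min_curv is the smallest positive eigenvalue of -\<Delta>; fix an
eigenfunction f for it and a vertex x with f x \<noteq> 0.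
In a distance-regular graph the Laplacian maps functions of d x to functions of d x, and it is
symmetric; hence it commutes with averaging over the spheres around x, and the sphere means A n
of f satisfy the three-term recurrence
b n (A (n+1) - A n) + c n (A (n-1) - A n) = - K A n. Testing the curvature with the distance
function from x along an edge between consecutive spheres gives
K \<le> (b n - c n) - (b (n+1) - c (n+1)). Together these force the increments of A to be constant
(a maximal increment spreads to its neighbours), and then b n - c n = b 0 - K n. Hence the distance
function d y from any vertex satisfies \<Delta> (d y) = Deg - K d y, and summing over V, where the
Laplacian sums to 0, gives \<Sum>z. d y z = Deg |V| / K for every y.\<close>

lemma lessThan_propagate:
  fixes P :: "nat \<Rightarrow> bool"
  assumes "m < N" "P m"
    and up: "\<And>n. Suc n < N \<Longrightarrow> P n \<Longrightarrow> P (Suc n)"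
    and down: "\<And>n. Suc n < N \<Longrightarrow> P (Suc n) \<Longrightarrow> P n"
    and "n < N"
  shows "P n"
proof (cases "m \<le> n")
  case True
  then show ?thesis
  proof (induction n rule: dec_induct)
    case (step k)
    then show ?case using up[of k] \<open>n < N\<close> by simp
  qed (fact \<open>P m\<close>)
next
  case False
  then have "n \<le> m" by simp
  then show ?thesis
  proof (induction n rule: inc_induct)
    case (step k)
    then show ?case using down[of k] \<open>m < N\<close> by simp
  qed (fact \<open>P m\<close>)
qed

lemma lessThan_ex_max:
  fixes g :: "nat \<Rightarrow> 'b::linorder"
  assumes "k < N"
  obtains m where "m < N" "\<And>j. j < N \<Longrightarrow> g j \<le> g m"
proof -
  have "Max (g ` {..<N}) \<in> g ` {..<N}"
    by (rule Max_in) (use assms in auto)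
  then obtain m where "m < N" "g m = Max (g ` {..<N})" by auto
  then show ?thesis using that[of m] by simp
qed

lemma recurrence_drift_of_unit_increments:
  fixes A b c :: "nat \<Rightarrow> real"
  assumes rec: "\<And>n. n \<le> N \<Longrightarrow> b n * (A (Suc n) - A n) + c n * (A (n - 1) - A n) = - K * A n"
    and unit: "\<And>n. n < N \<Longrightarrow> A (Suc n) - A n = 1"
    and b_N: "b N = 0" and c_0: "c 0 = 0" and "n \<le> N"
  shows "b n - c n = b 0 - K * real n"
proof -
  have A_lin: "A n = A 0 + real n" if "n \<le> N" for n
    using that by (induction n) (use unit in \<open>auto simp: algebra_simps\<close>)
  have drift: "b n - c n = - K * A n" if "n \<le> N" for n
  proof -
    have "b n * (A (Suc n) - A n) = b n"
      using unit[of n] b_N that by (cases "n < N") auto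
    moreover have "c n * (A (n - 1) - A n) = - c n"
      using unit[of "n - 1"] c_0 that by (cases n) (auto simp: algebra_simps)
    ultimately show ?thesis using rec[OF that] by linarith
  qed
  show ?thesis
    using drift[OF \<open>n \<le> N\<close>] drift[of 0] A_lin[OF \<open>n \<le> N\<close>] c_0 by (simp add: algebra_simps)
qed

context
  fixes A b c :: "nat \<Rightarrow> real" and K :: real and N :: nat
  assumes rec: "\<And>n. n \<le> N \<Longrightarrow> b n * (A (Suc n) - A n) + c n * (A (n - 1) - A n) = - K * A n"
    and drop: "\<And>n. n < N \<Longrightarrow> K \<le> (b n - c n) - (b (Suc n) - c (Suc n))"
    and b_pos: "\<And>n. n < N \<Longrightarrow> 0 < b n" and b_N: "b N = 0"
    and c_pos: "\<And>n. 0 < n \<Longrightarrow> n \<le> N \<Longrightarrow> 0 < c n" and c_0: "c 0 = 0"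
begin

lemma recurrence_nonzero_increment:
  assumes "A 0 \<noteq> 0" "K \<noteq> 0"
  obtains k where "k < N" "A (Suc k) - A k \<noteq> 0"
proof -
  have "b 0 * (A (Suc 0) - A 0) = - K * A 0" using rec[of 0] c_0 by simp
  then have "b 0 * (A (Suc 0) - A 0) \<noteq> 0" using assms by simp
  then have "b 0 \<noteq> 0" "A (Suc 0) - A 0 \<noteq> 0" by simp_all
  moreover have "0 < N" using b_N \<open>b 0 \<noteq> 0\<close> by (cases N) simp_all
  ultimately show ?thesis using that by blast
qed

lemma recurrence_unit_increment_slack:
  assumes "n < N" "A (Suc n) - A n = 1"
  shows "c n * (1 - (A n - A (n - 1))) + b (Suc n) * (1 - (A (Suc (Suc n)) - A (Suc n))) \<le> 0"
proof -
  have "K = K * (A (Suc n) - A n)" using assms(2) by simp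
  also have "\<dots> = b n - c n * (A n - A (n - 1)) - b (Suc n) * (A (Suc (Suc n)) - A (Suc n)) + c (Suc n)"
    using rec[of n] rec[of "Suc n"] assms by (simp add: algebra_simps)
  finally show ?thesis using drop[OF assms(1)] by (simp add: algebra_simps)
qed

lemma recurrence_unit_increments:
  assumes le_1: "\<And>n. n < N \<Longrightarrow> A (Suc n) - A n \<le> 1"
    and m: "m < N" "A (Suc m) - A m = 1" and n: "n < N"
  shows "A (Suc n) - A n = 1"
proof -
  have c_slack: "0 \<le> c n * (1 - (A n - A (n - 1)))" if "n < N" for n
    using c_pos[of n] le_1[of "n - 1"] that c_0 by (cases n) simp_all
  have b_slack: "0 \<le> b (Suc n) * (1 - (A (Suc (Suc n)) - A (Suc n)))" if "Suc n \<le> N" for n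
    using b_pos[of "Suc n"] le_1[of "Suc n"] that b_N by (cases "Suc n < N") simp_all
  have up: "A (Suc (Suc n)) - A (Suc n) = 1" if "Suc n < N" "A (Suc n) - A n = 1" for n
  proof -
    have "b (Suc n) * (1 - (A (Suc (Suc n)) - A (Suc n))) \<le> 0"
      using recurrence_unit_increment_slack[of n] c_slack[of n] that by linarith
    then show ?thesis
      using b_pos[of "Suc n"] le_1[of "Suc n"] that(1) by (simp add: mult_le_0_iff)
  qed
  have down: "A (Suc n) - A n = 1" if "Suc n < N" "A (Suc (Suc n)) - A (Suc n) = 1" for n
  proof -
    have "c (Suc n) * (1 - (A (Suc n) - A n)) \<le> 0"
      using recurrence_unit_increment_slack[of "Suc n"] b_slack[of "Suc n"] that by simp
    then show ?thesis
      using c_pos[of "Suc n"] le_1[of n] that(1) by (simp add: mult_le_0_iff)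
  qed
  show ?thesis
    using lessThan_propagate[where P = "\<lambda>n. A (Suc n) - A n = 1", OF m up down n] .
qed

end

lemma recurrence_drift_linear:
  fixes A b c :: "nat \<Rightarrow> real"
  assumes rec: "\<And>n. n \<le> N \<Longrightarrow> b n * (A (Suc n) - A n) + c n * (A (n - 1) - A n) = - K * A n"
    and drop: "\<And>n. n < N \<Longrightarrow> K \<le> (b n - c n) - (b (Suc n) - c (Suc n))"
    and b_pos: "\<And>n. n < N \<Longrightarrow> 0 < b n" and b_N: "b N = 0"
    and c_pos: "\<And>n. 0 < n \<Longrightarrow> n \<le> N \<Longrightarrow> 0 < c n" and c_0: "c 0 = 0"
    and A_0: "A 0 \<noteq> 0" and K: "K \<noteq> 0" and "n \<le> N"
  shows "b n - c n = b 0 - K * real n"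
proof -
  define \<delta> where "\<delta> n = A (Suc n) - A n" for n
  obtain i where i: "i < N" "\<delta> i \<noteq> 0"
    using recurrence_nonzero_increment[OF rec drop b_pos b_N c_pos c_0 A_0 K] unfolding \<delta>_def by blast
  obtain m where m: "m < N" "\<And>j. j < N \<Longrightarrow> \<bar>\<delta> j\<bar> \<le> \<bar>\<delta> m\<bar>"
    using lessThan_ex_max[where g = "\<lambda>j. \<bar>\<delta> j\<bar>", OF i(1)] by blast
  then have "\<delta> m \<noteq> 0" using m(2)[OF i(1)] i(2) by auto
  define \<psi> where "\<psi> k = A k / \<delta> m" for k
  have \<psi>_increment: "\<psi> (Suc k) - \<psi> k = \<delta> k / \<delta> m" for k
    by (simp add: \<psi>_def \<delta>_def diff_divide_distrib)
  have \<psi>_rec: "b k * (\<psi> (Suc k) - \<psi> k) + c k * (\<psi> (k - 1) - \<psi> k) = - K * \<psi> k" if "k \<le> N" for k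
  proof -
    have "b k * (\<psi> (Suc k) - \<psi> k) + c k * (\<psi> (k - 1) - \<psi> k)
        = (b k * (A (Suc k) - A k) + c k * (A (k - 1) - A k)) / \<delta> m"
      by (simp add: \<psi>_def add_divide_distrib[symmetric] diff_divide_distrib[symmetric])
    also have "\<dots> = - K * \<psi> k" using rec[OF that] by (simp add: \<psi>_def)
    finally show ?thesis .
  qed
  have "\<psi> (Suc k) - \<psi> k \<le> 1" if "k < N" for k
  proof -
    have "\<delta> k / \<delta> m \<le> \<bar>\<delta> k\<bar> / \<bar>\<delta> m\<bar>" by (metis abs_divide abs_ge_self)
    also have "\<dots> \<le> 1" using m(2)[OF that] by (simp add: divide_le_eq_1)
    finally show ?thesis by (simp add: \<psi>_increment)
  qed
  then have "\<psi> (Suc k) - \<psi> k = 1" if "k < N" for k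
    using recurrence_unit_increments[OF \<psi>_rec drop b_pos b_N c_pos c_0 _ m(1) _ that] \<open>\<delta> m \<noteq> 0\<close>
    by (simp add: \<psi>_increment)
  then show ?thesis
    using recurrence_drift_of_unit_increments[OF \<psi>_rec _ b_N c_0 \<open>n \<le> N\<close>] by blast
qed

locale sgraph =
  fixes V :: "'a set" and E :: "'a \<Rightarrow> 'a \<Rightarrow> bool"
  assumes simple: "simple_graph V E"
begin

abbreviation d :: "'a \<Rightarrow> 'a \<Rightarrow> nat" where "d \<equiv> gdist V E"
abbreviation \<Delta> :: "('a \<Rightarrow> real) \<Rightarrow> 'a \<Rightarrow> real" where "\<Delta> \<equiv> laplacian V E"

lemma finite_V: "finite V"
  using simple by (simp add: simple_graph_def)

lemma edge_in_V: "E u v \<Longrightarrow> u \<in> V" "E u v \<Longrightarrow> v \<in> V"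
  using simple by (simp_all add: simple_graph_def)

lemma edge_sym: "E u v \<Longrightarrow> E v u"
  using simple by (simp add: simple_graph_def)

lemma edge_irrefl: "\<not> E u u"
  using simple by (simp add: simple_graph_def)

lemma laplacian_eq_sum: "\<Delta> f z = (\<Sum>u\<in>V. if E z u then f u - f z else 0)"
  unfolding laplacian_def by (simp add: sum.inter_filter[OF finite_V])

lemma sum_mult_laplacian_commute: "(\<Sum>z\<in>V. g z * \<Delta> h z) = (\<Sum>z\<in>V. h z * \<Delta> g z)"
proof -
  define P where "P g h = (\<Sum>z\<in>V. \<Sum>u\<in>V. if E z u then g z * h u else 0)" for g h :: "'a \<Rightarrow> real"
  define D where "D g h = (\<Sum>z\<in>V. \<Sum>u\<in>V. if E z u then g z * h z else 0)" for g h :: "'a \<Rightarrow> real"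
  have expand: "(\<Sum>z\<in>V. g z * \<Delta> h z) = P g h - D g h" for g h
    unfolding P_def D_def laplacian_eq_sum
    by (simp add: sum_distrib_left sum_subtractf[symmetric] if_distrib right_diff_distrib cong: if_cong)
  have "P g h = (\<Sum>u\<in>V. \<Sum>z\<in>V. if E z u then g z * h u else 0)"
    unfolding P_def by (rule sum.swap)
  also have "\<dots> = P h g"
    unfolding P_def by (intro sum.cong refl) (auto dest: edge_sym)
  finally have "P g h = P h g" .
  moreover have "D g h = D h g"
    unfolding D_def by (intro sum.cong refl) (simp add: mult.commute)
  ultimately show ?thesis by (simp add: expand)
qed

lemma sum_laplacian: "(\<Sum>z\<in>V. \<Delta> h z) = 0"
  using sum_mult_laplacian_commute[of "\<lambda>_. 1" h] by (simp add: laplacian_def)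

lemma gdist_le_walk: "is_walk V E p n x y \<Longrightarrow> d x y \<le> n"
  unfolding gdist_def by (rule Least_le) blast

lemma gdist_self: "x \<in> V \<Longrightarrow> d x x = 0"
  using gdist_le_walk[of "\<lambda>_. x" 0 x x] by (simp add: is_walk_def)

definition sphere :: "'a \<Rightarrow> nat \<Rightarrow> 'a set" where
  "sphere x n = {z \<in> V. d x z = n}"

definition ecc :: "'a \<Rightarrow> nat" where
  "ecc x = Max (d x ` V)"

definition sphere_mean :: "('a \<Rightarrow> real) \<Rightarrow> 'a \<Rightarrow> nat \<Rightarrow> real" where
  "sphere_mean f x n = sum f (sphere x n) / card (sphere x n)"

lemma finite_sphere: "finite (sphere x n)"
  unfolding sphere_def using finite_V by simp

lemma gdist_le_ecc: "z \<in> V \<Longrightarrow> d x z \<le> ecc x"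
  unfolding ecc_def using finite_V by simp

lemma ecc_attained: "x \<in> V \<Longrightarrow> \<exists>z\<in>V. d x z = ecc x"
proof -
  assume "x \<in> V"
  then have "ecc x \<in> d x ` V"
    unfolding ecc_def using finite_V by (intro Max_in) auto
  then show ?thesis by auto
qed

lemma sum_sphere_radial: "(\<Sum>z\<in>sphere x n. h (d x z)) = real (card (sphere x n)) * h n"
  by (simp add: sphere_def)

lemma sum_sphere_mean: "(\<Sum>z\<in>sphere x n. sphere_mean f x (d x z)) = sum f (sphere x n)"
proof -
  have "(\<Sum>z\<in>sphere x n. sphere_mean f x (d x z)) = real (card (sphere x n)) * sphere_mean f x n"
    by (rule sum_sphere_radial)
  also have "\<dots> = sum f (sphere x n)"
    by (cases "sphere x n = {}") (simp_all add: sphere_mean_def finite_sphere)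
  finally show ?thesis .
qed

lemma sum_mult_radial:
  fixes g :: "'a \<Rightarrow> real"
  shows "(\<Sum>z\<in>V. g z * \<psi> (d x z)) = (\<Sum>n\<in>d x ` V. \<psi> n * sum g (sphere x n))"
proof -
  have "(\<Sum>z\<in>V. g z * \<psi> (d x z)) = (\<Sum>n\<in>d x ` V. \<Sum>z\<in>sphere x n. g z * \<psi> (d x z))"
    unfolding sphere_def using finite_V by (intro sum.group[symmetric]) auto
  also have "\<dots> = (\<Sum>n\<in>d x ` V. \<Sum>z\<in>sphere x n. \<psi> n * g z)"
    by (intro sum.cong refl) (simp add: sphere_def mult.commute)
  also have "\<dots> = (\<Sum>n\<in>d x ` V. \<psi> n * sum g (sphere x n))"
    by (simp add: sum_distrib_left)
  finally show ?thesis .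
qed

lemma sum_mult_radial_sphere_mean:
  "(\<Sum>z\<in>V. sphere_mean g x (d x z) * \<psi> (d x z)) = (\<Sum>z\<in>V. g z * \<psi> (d x z))"
proof -
  have "(\<Sum>z\<in>V. sphere_mean g x (d x z) * \<psi> (d x z))
      = (\<Sum>n\<in>d x ` V. \<psi> n * (\<Sum>z\<in>sphere x n. sphere_mean g x (d x z)))"
    by (rule sum_mult_radial)
  then show ?thesis by (simp only: sum_sphere_mean sum_mult_radial)
qed

lemma finite_edge_diffs: "finite {\<bar>f u - f v\<bar> | u v. u \<in> V \<and> v \<in> V \<and> E u v}"
proof -
  have "{\<bar>f u - f v\<bar> | u v. u \<in> V \<and> v \<in> V \<and> E u v} \<subseteq> (\<lambda>(u, v). \<bar>f u - f v\<bar>) ` (V \<times> V)"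
    by auto
  then show ?thesis using finite_V finite_subset by blast
qed

lemma edge_diff_le_Max:
  "E u v \<Longrightarrow> \<bar>f u - f v\<bar> \<le> Max {\<bar>f u - f v\<bar> | u v. u \<in> V \<and> v \<in> V \<and> E u v}"
  by (rule Max_ge[OF finite_edge_diffs]) (auto intro: edge_in_V)

lemma Max_edge_diff_eq_1:
  assumes "\<And>u v. E u v \<Longrightarrow> \<bar>f u - f v\<bar> \<le> 1" and "E w y" "\<bar>f w - f y\<bar> = 1"
  shows "Max {\<bar>f u - f v\<bar> | u v. u \<in> V \<and> v \<in> V \<and> E u v} = 1"
proof (rule Max_eqI[OF finite_edge_diffs])
  show "1 \<in> {\<bar>f u - f v\<bar> | u v. u \<in> V \<and> v \<in> V \<and> E u v}"
    using assms(2,3) edge_in_V by force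
qed (use assms(1) in auto)

lemma abs_laplacian_le_card:
  assumes "\<And>u v. E u v \<Longrightarrow> \<bar>f u - f v\<bar> \<le> 1"
  shows "\<bar>\<Delta> f z\<bar> \<le> card V"
proof -
  have "\<bar>\<Delta> f z\<bar> \<le> (\<Sum>u\<in>{u\<in>V. E z u}. \<bar>f u - f z\<bar>)"
    unfolding laplacian_def by (rule sum_abs)
  also have "\<dots> \<le> (\<Sum>u\<in>{u\<in>V. E z u}. 1)"
    using assms edge_sym by (intro sum_mono) force
  also have "\<dots> \<le> card V"
    using finite_V by (simp add: card_mono)
  finally show ?thesis .
qed

lemma ollivier_curv_le:
  assumes "E w y" "f y - f w = 1" and lip: "\<And>u v. E u v \<Longrightarrow> \<bar>f u - f v\<bar> \<le> 1"
  shows "ollivier_curv V E w y \<le> \<Delta> f w - \<Delta> f y"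
  unfolding ollivier_curv_def
proof (rule cInf_lower)
  show "\<Delta> f w - \<Delta> f y \<in> {\<Delta> f w - \<Delta> f y | f. f y - f w = 1
      \<and> Max {\<bar>f u - f v\<bar> | u v. u \<in> V \<and> v \<in> V \<and> E u v} = 1}"
    using assms Max_edge_diff_eq_1[of f w y] by auto
  show "bdd_below {\<Delta> f w - \<Delta> f y | f. f y - f w = 1
      \<and> Max {\<bar>f u - f v\<bar> | u v. u \<in> V \<and> v \<in> V \<and> E u v} = 1}"
  proof (rule bdd_belowI, safe)
    fix g :: "'a \<Rightarrow> real"
    assume "Max {\<bar>g u - g v\<bar> | u v. u \<in> V \<and> v \<in> V \<and> E u v} = 1"
    then have "\<bar>g u - g v\<bar> \<le> 1" if "E u v" for u v
      using edge_diff_le_Max[OF that, of g] by simp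
    then have "\<bar>\<Delta> g w\<bar> \<le> card V" "\<bar>\<Delta> g y\<bar> \<le> card V"
      using abs_laplacian_le_card by blast+
    then show "- 2 * real (card V) \<le> \<Delta> g w - \<Delta> g y" by (simp add: abs_le_iff)
  qed
qed

lemma min_curv_le_ollivier_curv:
  assumes "E w y"
  shows "min_curv V E \<le> ollivier_curv V E w y"
  unfolding min_curv_def
proof (rule Min_le)
  have "{ollivier_curv V E u v | u v. u \<in> V \<and> v \<in> V \<and> E u v}
      \<subseteq> (\<lambda>(u, v). ollivier_curv V E u v) ` (V \<times> V)"
    by auto
  then show "finite {ollivier_curv V E u v | u v. u \<in> V \<and> v \<in> V \<and> E u v}"
    using finite_V finite_subset by blast
qed (use assms edge_in_V in blast)

lemma min_curv_le_laplacian_diff: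
  assumes "E w y" "f y - f w = 1" "\<And>u v. E u v \<Longrightarrow> \<bar>f u - f v\<bar> \<le> 1"
  shows "min_curv V E \<le> \<Delta> f w - \<Delta> f y"
  using min_curv_le_ollivier_curv[OF assms(1)] ollivier_curv_le[OF assms] by linarith

end

locale connected_sgraph = sgraph +
  assumes connected: "connected_graph V E"
begin

lemma gdist_walk:
  assumes "x \<in> V" "y \<in> V"
  shows "\<exists>p. is_walk V E p (d x y) x y"
proof -
  have "\<exists>n p. is_walk V E p n x y"
    using connected assms unfolding connected_graph_def by blast
  then show ?thesis unfolding gdist_def by (rule LeastI_ex)
qed

lemma gdist_eq_0_iff: "x \<in> V \<Longrightarrow> y \<in> V \<Longrightarrow> d x y = 0 \<longleftrightarrow> x = y"
  using gdist_walk[of x y] gdist_self[of x] by (auto simp: is_walk_def)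

lemma gdist_edge_le: "x \<in> V \<Longrightarrow> E u v \<Longrightarrow> d x v \<le> d x u + 1"
proof -
  assume "x \<in> V" "E u v"
  then obtain p where "is_walk V E p (d x u) x u" using gdist_walk edge_in_V by blast
  then have "is_walk V E (p(Suc (d x u) := v)) (Suc (d x u)) x v"
    using \<open>E u v\<close> edge_in_V by (auto simp: is_walk_def less_Suc_eq le_Suc_eq)
  then show ?thesis using gdist_le_walk by fastforce
qed

lemma gdist_edge_cases:
  assumes "x \<in> V" "E u v"
  obtains "d x v = d x u + 1" | "d x v + 1 = d x u" | "d x v = d x u"
  using gdist_edge_le[OF assms] gdist_edge_le[OF assms(1) edge_sym[OF assms(2)]] by linarith

lemma gdist_pred:
  assumes "x \<in> V" "z \<in> V" "d x z = Suc n"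
  obtains w where "E w z" "d x w = n"
proof -
  obtain p where p: "is_walk V E p (Suc n) x z" using gdist_walk assms by fastforce
  then have "is_walk V E p n x (p n)" "E (p n) z" by (auto simp: is_walk_def)
  then have "d x (p n) \<le> n" "d x z \<le> d x (p n) + 1"
    using gdist_le_walk gdist_edge_le[OF assms(1)] by blast+
  then show ?thesis using that \<open>E (p n) z\<close> assms(3) by force
qed

lemma gdist_intermediate: "x \<in> V \<Longrightarrow> z \<in> V \<Longrightarrow> m \<le> d x z \<Longrightarrow> \<exists>w\<in>V. d x w = m"
proof (induction "d x z" arbitrary: z)
  case (Suc n)
  show ?case
  proof (cases "m = Suc n")
    case False
    obtain w where "E w z" "d x w = n" using gdist_pred Suc by metis
    then show ?thesis using Suc False edge_in_V by force
  qed (use Suc in metis)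
qed (use gdist_self in force)

lemma sphere_0: "x \<in> V \<Longrightarrow> sphere x 0 = {x}"
  unfolding sphere_def using gdist_eq_0_iff by auto

lemma sphere_nonempty:
  assumes "x \<in> V" "n \<le> ecc x"
  shows "sphere x n \<noteq> {}"
proof -
  obtain z where "z \<in> V" "d x z = ecc x" using ecc_attained assms(1) by blast
  then show ?thesis using gdist_intermediate assms by (force simp: sphere_def)
qed

lemma sphere_edge:
  assumes "x \<in> V" "n < ecc x"
  obtains w y where "w \<in> sphere x n" "y \<in> sphere x (Suc n)" "E w y"
proof -
  obtain z where "z \<in> V" "d x z = ecc x" using ecc_attained assms(1) by blast
  then obtain y where "y \<in> V" "d x y = Suc n" using gdist_intermediate assms by (metis Suc_leI)
  moreover obtain w where "E w y" "d x w = n" using gdist_pred assms(1) calculation by metis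
  ultimately show ?thesis using that edge_in_V by (auto simp: sphere_def)
qed

end

locale distance_regular_sgraph = connected_sgraph +
  fixes b c :: "nat \<Rightarrow> nat"
  assumes card_forward: "x \<in> V \<Longrightarrow> z \<in> V \<Longrightarrow> card {w\<in>V. E z w \<and> d x w = d x z + 1} = b (d x z)"
    and card_backward: "x \<in> V \<Longrightarrow> z \<in> V \<Longrightarrow> card {w\<in>V. E z w \<and> d x w + 1 = d x z} = c (d x z)"
begin

text \<open>At n = 0 the truncated index n - 1 is 0; this is harmless since c 0 = 0 (lemma c_0).\<close>
definition radial_laplacian :: "(nat \<Rightarrow> real) \<Rightarrow> nat \<Rightarrow> real" where
  "radial_laplacian \<phi> n = real (b n) * (\<phi> (Suc n) - \<phi> n) + real (c n) * (\<phi> (n - 1) - \<phi> n)"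

lemma Deg_eq_b_0:
  assumes "z \<in> V"
  shows "Deg V E z = b 0"
proof -
  have "{w\<in>V. E z w} = {w\<in>V. E z w \<and> d z w = d z z + 1}"
    using gdist_edge_le[OF assms] gdist_eq_0_iff[OF assms] gdist_self[OF assms] edge_irrefl
    by (fastforce simp: le_Suc_eq)
  then show ?thesis unfolding Deg_def using card_forward[OF assms assms] gdist_self[OF assms] by simp
qed

lemma c_0: "x \<in> V \<Longrightarrow> c 0 = 0"
  using card_backward[of x x] gdist_self[of x] by simp

lemma laplacian_radial:
  assumes "x \<in> V" "z \<in> V"
  shows "\<Delta> (\<lambda>w. \<phi> (d x w)) z = radial_laplacian \<phi> (d x z)"
proof -
  let ?n = "d x z"
  have split_by_layer: "(if E z u then \<phi> (d x u) - \<phi> ?n else 0)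
      = (if E z u \<and> d x u = ?n + 1 then \<phi> (Suc ?n) - \<phi> ?n else 0)
      + (if E z u \<and> d x u + 1 = ?n then \<phi> (?n - 1) - \<phi> ?n else 0)" for u
  proof (cases "E z u")
    case True
    then show ?thesis
    proof (cases rule: gdist_edge_cases[OF assms(1) True])
      case 2
      then have "d x u = ?n - 1" by simp
      with True 2 show ?thesis by simp
    qed auto
  qed simp
  have "\<Delta> (\<lambda>w. \<phi> (d x w)) z
      = (\<Sum>u\<in>V. (if E z u \<and> d x u = ?n + 1 then \<phi> (Suc ?n) - \<phi> ?n else 0)
        + (if E z u \<and> d x u + 1 = ?n then \<phi> (?n - 1) - \<phi> ?n else 0))"
    unfolding laplacian_eq_sum split_by_layer ..
  also have "\<dots> = radial_laplacian \<phi> ?n"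
    using card_forward[OF assms] card_backward[OF assms] finite_V
    by (simp add: radial_laplacian_def sum.distrib sum.inter_filter[symmetric] del: One_nat_def)
  finally show ?thesis .
qed

lemma b_pos:
  assumes "x \<in> V" "n < ecc x"
  shows "0 < b n"
proof -
  obtain w y where "w \<in> sphere x n" "y \<in> sphere x (Suc n)" "E w y"
    using sphere_edge assms by blast
  then have "y \<in> {u\<in>V. E w u \<and> d x u = d x w + 1}"
    by (auto simp: sphere_def intro: edge_in_V)
  then have "0 < card {u\<in>V. E w u \<and> d x u = d x w + 1}"
    using finite_V by (auto simp: card_gt_0_iff)
  then show ?thesis using card_forward assms(1) \<open>w \<in> sphere x n\<close> by (auto simp: sphere_def)
qed

lemma c_pos:
  assumes "x \<in> V" "0 < n" "n \<le> ecc x"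
  shows "0 < c n"
proof -
  have "n - 1 < ecc x" using assms by linarith
  then obtain w y where "w \<in> sphere x (n - 1)" "y \<in> sphere x (Suc (n - 1))" "E w y"
    using sphere_edge assms(1) by blast
  then have "y \<in> sphere x n" using assms(2) by simp
  with \<open>w \<in> sphere x (n - 1)\<close> \<open>E w y\<close> have "w \<in> {u\<in>V. E y u \<and> d x u + 1 = d x y}"
    using assms(2) by (auto simp: sphere_def intro: edge_in_V edge_sym)
  then have "0 < card {u\<in>V. E y u \<and> d x u + 1 = d x y}"
    using finite_V by (auto simp: card_gt_0_iff)
  then show ?thesis using card_backward assms(1) \<open>y \<in> sphere x n\<close> by (auto simp: sphere_def)
qed

lemma b_ecc:
  assumes "x \<in> V"
  shows "b (ecc x) = 0"
proof -
  obtain z where z: "z \<in> V" "d x z = ecc x" using ecc_attained assms by blast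
  then have "{w\<in>V. E z w \<and> d x w = d x z + 1} = {}"
    by (auto dest: gdist_le_ecc[of _ x])
  then show ?thesis using card_forward[OF assms z(1)] z(2) by (metis card.empty)
qed

lemma ecc_eq:
  assumes "x \<in> V" "y \<in> V"
  shows "ecc x = ecc y"
  using b_pos[of x "ecc y"] b_pos[of y "ecc x"] b_ecc assms by (metis less_irrefl linorder_cases)

lemma radial_laplacian_of_nat:
  assumes "x \<in> V"
  shows "radial_laplacian real n = real (b n) - real (c n)"
  using c_0[OF assms] by (cases n) (simp_all add: radial_laplacian_def)

lemma min_curv_le_drift_step:
  assumes "x \<in> V" "n < ecc x"
  shows "min_curv V E \<le> (real (b n) - real (c n)) - (real (b (Suc n)) - real (c (Suc n)))"
proof -
  obtain w y where w: "w \<in> sphere x n" and y: "y \<in> sphere x (Suc n)" and "E w y"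
    using sphere_edge assms by blast
  have "\<bar>real (d x u) - real (d x v)\<bar> \<le> 1" if "E u v" for u v
    using gdist_edge_le[OF assms(1) that] gdist_edge_le[OF assms(1) edge_sym[OF that]] by linarith
  then have "min_curv V E \<le> \<Delta> (\<lambda>v. real (d x v)) w - \<Delta> (\<lambda>v. real (d x v)) y"
    using min_curv_le_laplacian_diff[OF \<open>E w y\<close>] w y by (simp add: sphere_def)
  then show ?thesis
    using w y assms(1) by (simp add: sphere_def laplacian_radial radial_laplacian_of_nat)
qed

lemma sphere_mean_recurrence:
  assumes "x \<in> V" "n \<le> ecc x" and eigen: "\<And>z. z \<in> V \<Longrightarrow> \<Delta> f z = - K * f z"
  shows "radial_laplacian (sphere_mean f x) n = - K * sphere_mean f x n"
proof -
  let ?A = "sphere_mean f x" and ?\<chi> = "\<lambda>m. if m = n then 1 else (0::real)"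
  have sphere_sum: "(\<Sum>z\<in>V. ?\<chi> (d x z) * g z) = sum g (sphere x n)" for g
    unfolding sphere_def using finite_V by (auto simp: sum.inter_filter intro!: sum.cong)
  have radial: "\<Delta> (\<lambda>w. \<phi> (d x w)) z = radial_laplacian \<phi> (d x z)" if "z \<in> V" for \<phi> z
    using laplacian_radial[OF assms(1) that] .
  have "card (sphere x n) * radial_laplacian ?A n = (\<Sum>z\<in>V. ?\<chi> (d x z) * \<Delta> (\<lambda>w. ?A (d x w)) z)"
    by (simp add: sphere_sum radial sum_sphere_radial)
  also have "\<dots> = (\<Sum>z\<in>V. ?A (d x z) * \<Delta> (\<lambda>w. ?\<chi> (d x w)) z)"
    by (rule sum_mult_laplacian_commute)
  also have "\<dots> = (\<Sum>z\<in>V. ?A (d x z) * radial_laplacian ?\<chi> (d x z))"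
    by (intro sum.cong refl) (simp add: radial[where \<phi> = ?\<chi>])
  also have "\<dots> = (\<Sum>z\<in>V. f z * radial_laplacian ?\<chi> (d x z))"
    by (rule sum_mult_radial_sphere_mean)
  also have "\<dots> = (\<Sum>z\<in>V. f z * \<Delta> (\<lambda>w. ?\<chi> (d x w)) z)"
    by (intro sum.cong refl) (simp add: radial[where \<phi> = ?\<chi>])
  also have "\<dots> = (\<Sum>z\<in>V. ?\<chi> (d x z) * \<Delta> f z)"
    by (rule sum_mult_laplacian_commute)
  also have "\<dots> = - K * (\<Sum>z\<in>V. f z * ?\<chi> (d x z))"
    by (simp add: eigen sum_distrib_left mult_ac cong: sum.cong)
  also have "\<dots> = - K * (\<Sum>z\<in>V. ?A (d x z) * ?\<chi> (d x z))"
    by (simp only: sum_mult_radial_sphere_mean[where \<psi> = ?\<chi>])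
  also have "\<dots> = - K * (\<Sum>z\<in>V. ?\<chi> (d x z) * ?A (d x z))"
    by (simp add: mult.commute)
  also have "\<dots> = card (sphere x n) * (- K * ?A n)"
    by (simp add: sphere_sum sum_sphere_radial)
  finally have "card (sphere x n) * radial_laplacian ?A n = card (sphere x n) * (- K * ?A n)" .
  moreover have "real (card (sphere x n)) \<noteq> 0"
    using sphere_nonempty[OF assms(1,2)] finite_sphere[of x n] by simp
  ultimately show ?thesis using mult_left_cancel by blast
qed

lemma drift_linear:
  assumes "x \<in> V" "f x \<noteq> 0" "min_curv V E \<noteq> 0"
    and eigen: "\<And>z. z \<in> V \<Longrightarrow> \<Delta> f z = - min_curv V E * f z"
    and "n \<le> ecc x"
  shows "real (b n) - real (c n) = real (b 0) - min_curv V E * real n"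
proof -
  let ?A = "sphere_mean f x"
  have "?A 0 = f x" using assms(1) by (simp add: sphere_mean_def sphere_0)
  then show ?thesis
  proof (intro recurrence_drift_linear[where A = ?A and N = "ecc x"
        and b = "\<lambda>k. real (b k)" and c = "\<lambda>k. real (c k)"])
    show "real (b k) * (?A (Suc k) - ?A k) + real (c k) * (?A (k - 1) - ?A k) = - min_curv V E * ?A k"
      if "k \<le> ecc x" for k
      using sphere_mean_recurrence[OF assms(1) that eigen] by (simp add: radial_laplacian_def)
  qed (use assms min_curv_le_drift_step b_pos b_ecc c_pos c_0 in auto)
qed

lemma sum_gdist:
  assumes "y \<in> V" "K \<noteq> 0"
    and drift: "\<And>n. n \<le> ecc y \<Longrightarrow> real (b n) - real (c n) = real (b 0) - K * real n"
  shows "(\<Sum>z\<in>V. real (d y z)) = real (b 0) * real (card V) / K"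
proof -
  have "\<Delta> (\<lambda>w. real (d y w)) z = real (b 0) - K * real (d y z)" if "z \<in> V" for z
    using laplacian_radial[OF assms(1) that, where \<phi> = real] radial_laplacian_of_nat[OF assms(1)]
      drift[OF gdist_le_ecc[OF that]] by simp
  then have "(\<Sum>z\<in>V. real (b 0) - K * real (d y z)) = 0"
    using sum_laplacian[of "\<lambda>w. real (d y w)"] by simp
  then have "K * (\<Sum>z\<in>V. real (d y z)) = real (b 0) * real (card V)"
    by (simp add: sum_subtractf sum_distrib_left mult.commute)
  then show ?thesis using assms(2) by (simp add: field_simps)
qed

end

theorem theorem3p6:
  fixes V :: "'a set" and E :: "'a \<Rightarrow> 'a \<Rightarrow> bool"
  assumes "simple_graph V E" and "connected_graph V E"
    and "lichnerowicz_sharp V E" and "distance_regular V E"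
  shows "diam_eff V E = real (Max (Deg V E ` V)) / min_curv V E"
proof -
  obtain b c :: "nat \<Rightarrow> nat" where bc: "\<forall>x\<in>V. \<forall>z\<in>V.
      card {w\<in>V. E z w \<and> gdist V E x w = gdist V E x z + 1} = b (gdist V E x z)
    \<and> card {w\<in>V. E z w \<and> gdist V E x w + 1 = gdist V E x z} = c (gdist V E x z)"
    using assms(4) unfolding distance_regular_def by blast
  interpret distance_regular_sgraph V E b c
    using assms(1,2) bc by unfold_locales auto
  let ?K = "min_curv V E"
  obtain f x where x: "x \<in> V" "f x \<noteq> 0" and K_pos: "0 < ?K"
    and eigen: "\<And>z. z \<in> V \<Longrightarrow> \<Delta> f z = - ?K * f z"
    using assms(3) unfolding lichnerowicz_sharp_def is_eigenvalue_neg_lap_def by force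
  have drift: "real (b n) - real (c n) = real (b 0) - ?K * real n" if "n \<le> ecc x" for n
    using drift_linear[OF x _ eigen that] K_pos by simp
  have "(\<Sum>z\<in>V. real (d y z)) = real (b 0) * real (card V) / ?K" if "y \<in> V" for y
    using sum_gdist[OF that _ drift] ecc_eq[OF x(1) that] K_pos by simp
  moreover have "card V \<noteq> 0"
    using x(1) finite_V by auto
  ultimately have "diam_eff V E = real (b 0) / ?K"
    by (simp add: diam_eff_def power2_eq_square)
  moreover have "Deg V E ` V = {b 0}"
    using Deg_eq_b_0 x(1) by auto
  ultimately show ?thesis by simp
qed

end
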